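(* Let $A,\xi_0>0$, $0<\alpha<\frac12$, and let $\{w_n\}_{n\ge0}$ be functions $w_n\colon(0,\xi_0]\to[0,1]$ with $w_{n+1}(\xi)\le w_n(\xi)$ for all $n,\xi$. If $w_{n+k}(\xi)\le4(1-A\xi^2)^kw_n(\xi)$ for all $\xi\in(0,\xi_0]$ and all integers $k,n\ge0$, then the sequence $$s_n=\sup\{w_n(\xi):\ n^{-\alpha}\le\xi\le\xi_0\}$$ decays rapidly in $n$.
   Context: A sequence $\{s_n\}$ decays rapidly in $n$ if for each $\ell\ge1$ there is $C$ with $|s_n|\le Cn^{-\ell}$ for all $n\ge1$ (a supremum over the empty set is taken to be $0$). *)

theory Defs
  imports Complex_Main
begin

definition decays_rapidly :: "(nat \<Rightarrow> real) \<Rightarrow> bool" where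
  "decays_rapidly s \<longleftrightarrow> (\<forall>l::nat. l \<ge> 1 \<longrightarrow> (\<exists>C::real. \<forall>n::nat. n \<ge> 1 \<longrightarrow> \<bar>s n\<bar> \<le> C * real n powr (- real l)))"

definition sup0 :: "(real \<Rightarrow> real) \<Rightarrow> real set \<Rightarrow> real" where
  "sup0 f S = (if S = {} then 0 else Sup (f ` S))"

end

theory Submission
  imports Defs
begin

text \<open>Iterating the hypothesis from n = 0 gives w n \<xi> \<le> 4 (1 - A \<xi>^2)^n \<le> 4 exp (- A n \<xi>^2),
  and \<xi> \<ge> n^(-\<alpha>) turns this into the uniform bound 4 exp (- A n^(1 - 2\<alpha>)) with
  1 - 2\<alpha> > 0. Such a stretched exponential decays faster than any power of n, because
  exp x \<ge> x^m / m! for every m.\<close>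

lemma power_div_fact_le_exp:
  fixes x :: real
  assumes "0 \<le> x"
  shows "x ^ m / fact m \<le> exp x"
proof -
  have exp_sums: "(\<lambda>n. x ^ n /\<^sub>R fact n) sums exp x"
    by (rule exp_converges)
  have "(\<Sum>i\<in>{m}. x ^ i /\<^sub>R fact i) \<le> (\<Sum>n. x ^ n /\<^sub>R fact n)"
    by (rule sum_le_suminf) (use exp_sums assms in \<open>auto simp: sums_iff\<close>)
  then show ?thesis
    using exp_sums by (simp add: sums_iff divide_inverse mult.commute)
qed

lemma decays_rapidly_exp_neg_powr:
  fixes A \<beta> :: real
  assumes "0 < A" "0 < \<beta>"
  shows "decays_rapidly (\<lambda>n. exp (- A * real n powr \<beta>))"
  unfolding decays_rapidly_def
proof (intro allI impI)
  fix l :: nat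
  define m where "m = nat \<lceil>real l / \<beta>\<rceil>"
  have "real l / \<beta> \<le> real m"
    unfolding m_def by linarith
  then have l_le: "real l \<le> real m * \<beta>"
    using assms by (simp add: field_simps)
  have "exp (- A * real n powr \<beta>) \<le> fact m / A ^ m * real n powr (- real l)"
    if "1 \<le> n" for n :: nat
  proof -
    have n_pos: "0 < real n"
      using that by simp
    have "A ^ m * real n powr real l \<le> A ^ m * real n powr (real m * \<beta>)"
      using that l_le assms by (intro mult_left_mono powr_mono) auto
    also have "\<dots> = (A * real n powr \<beta>) ^ m"
      using n_pos by (simp add: power_mult_distrib powr_realpow[symmetric] powr_powr mult.commute)
    also have "\<dots> \<le> fact m * exp (A * real n powr \<beta>)"
      using power_div_fact_le_exp[of "A * real n powr \<beta>" m] assms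
      by (simp add: divide_le_eq mult.commute)
    finally have "A ^ m * real n powr real l \<le> fact m * exp (A * real n powr \<beta>)" .
    then show ?thesis
      using assms n_pos by (simp add: exp_minus powr_minus field_simps)
  qed
  then show "\<exists>C. \<forall>n. 1 \<le> n \<longrightarrow>
      \<bar>exp (- A * real n powr \<beta>)\<bar> \<le> C * real n powr - real l"
    by (intro exI[of _ "fact m / A ^ m"]) auto
qed

lemma decays_rapidly_le:
  assumes "decays_rapidly t" and "0 \<le> c"
    and "\<And>n. 1 \<le> n \<Longrightarrow> \<bar>s n\<bar> \<le> c * t n"
  shows "decays_rapidly s"
  unfolding decays_rapidly_def
proof (intro allI impI)
  fix l :: nat
  assume "1 \<le> l"
  then obtain C where C: "\<And>n. 1 \<le> n \<Longrightarrow> \<bar>t n\<bar> \<le> C * real n powr - real l"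
    using assms(1) unfolding decays_rapidly_def by blast
  have "\<bar>s n\<bar> \<le> c * C * real n powr - real l" if "1 \<le> n" for n
  proof -
    have "\<bar>s n\<bar> \<le> c * \<bar>t n\<bar>"
      using assms(3)[OF that] assms(2) by (smt (verit) abs_ge_self mult_left_mono)
    also have "\<dots> \<le> c * (C * real n powr - real l)"
      using C[OF that] assms(2) by (rule mult_left_mono)
    finally show ?thesis
      by simp
  qed
  then show "\<exists>C. \<forall>n. 1 \<le> n \<longrightarrow> \<bar>s n\<bar> \<le> C * real n powr - real l"
    by blast
qed

lemma abs_sup0_le:
  assumes "0 \<le> b" and "\<And>x. x \<in> S \<Longrightarrow> 0 \<le> f x \<and> f x \<le> b"
  shows "\<bar>sup0 f S\<bar> \<le> b"
proof (cases "S = {}")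
  case True
  then show ?thesis
    using assms(1) by (simp add: sup0_def)
next
  case False
  then obtain x where x: "x \<in> S"
    by blast
  have "bdd_above (f ` S)"
    using assms(2) by (intro bdd_aboveI[of _ b]) auto
  then have "f x \<le> Sup (f ` S)"
    using x by (intro cSup_upper) auto
  then have "0 \<le> Sup (f ` S)"
    using assms(2)[OF x] by linarith
  moreover have "Sup (f ` S) \<le> b"
    using False assms(2) by (intro cSup_least) auto
  ultimately show ?thesis
    using False by (simp add: sup0_def)
qed

lemma exp_decay_of_geometric_decay:
  fixes u :: "nat \<Rightarrow> real"
  assumes "1 \<le> c"
    and "\<And>n. 0 \<le> u n \<and> u n \<le> 1"
    and "\<And>n k. u (n + k) \<le> c * (1 - a) ^ k * u n"
  shows "u n \<le> c * exp (- a * real n)"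
proof (cases "0 \<le> 1 - a")
  case True
  have "u n \<le> c * (1 - a) ^ n * u 0"
    using assms(3)[of 0 n] by simp
  also have "\<dots> \<le> c * (1 - a) ^ n"
    using True assms by (simp add: mult_left_le)
  also have "(1 - a) ^ n \<le> exp (- a) ^ n"
    using True exp_ge_add_one_self[of "- a"] by (intro power_mono) auto
  also have "exp (- a) ^ n = exp (- a * real n)"
    by (simp add: exp_of_nat_mult[symmetric] mult.commute)
  finally show ?thesis
    using assms(1) by simp
next
  case False
  show ?thesis
  proof (cases n)
    case 0
    then show ?thesis
      using assms(1) assms(2)[of 0] by simp
  next
    case (Suc m)
    \<comment> \<open>a single step with the negative factor 1 - a already forces u n \<le> 0\<close>
    have "u n \<le> c * (1 - a) * u m"
      using assms(3)[of m 1] Suc by simp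
    also have "\<dots> \<le> 0"
      using False assms(1) assms(2)[of m] by (intro mult_nonpos_nonneg mult_nonneg_nonpos) auto
    finally show ?thesis
      by (smt (verit) assms(1) exp_gt_zero mult_pos_pos)
  qed
qed

lemma powr_one_minus_twice_le:
  fixes x \<alpha> \<xi> :: real
  assumes "0 < x" and "x powr (- \<alpha>) \<le> \<xi>"
  shows "x powr (1 - 2 * \<alpha>) \<le> x * \<xi>\<^sup>2"
proof -
  have "(x powr (- \<alpha>))\<^sup>2 \<le> \<xi>\<^sup>2"
    using assms by (intro power_mono) auto
  then have "x * (x powr (- \<alpha>))\<^sup>2 \<le> x * \<xi>\<^sup>2"
    using assms(1) by simp
  moreover have "x * (x powr (- \<alpha>))\<^sup>2 = x powr (1 - 2 * \<alpha>)"
    using assms(1) by (simp add: powr_realpow[symmetric] powr_powr powr_diff powr_minus field_simps)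
  ultimately show ?thesis
    by simp
qed

theorem proposition7p4:
  fixes A \<xi>0 \<alpha> :: real and w :: "nat \<Rightarrow> real \<Rightarrow> real"
  assumes "A > 0" and "\<xi>0 > 0" and "0 < \<alpha>" and "\<alpha> < 1/2"
    and "\<And>n \<xi>. \<xi> \<in> {0<..\<xi>0} \<Longrightarrow> 0 \<le> w n \<xi> \<and> w n \<xi> \<le> 1"
    and "\<And>n \<xi>. \<xi> \<in> {0<..\<xi>0} \<Longrightarrow> w (Suc n) \<xi> \<le> w n \<xi>"
    and "\<And>n k \<xi>. \<xi> \<in> {0<..\<xi>0} \<Longrightarrow> w (n + k) \<xi> \<le> 4 * (1 - A * \<xi>^2) ^ k * w n \<xi>"
  shows "decays_rapidly (\<lambda>n. sup0 (w n) {\<xi>. real n powr (- \<alpha>) \<le> \<xi> \<and> \<xi> \<le> \<xi>0})"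
proof (rule decays_rapidly_le)
  show "decays_rapidly (\<lambda>n. exp (- A * real n powr (1 - 2 * \<alpha>)))"
    using assms(1,4) by (intro decays_rapidly_exp_neg_powr) auto
  fix n :: nat
  assume "1 \<le> n"
  then have n_pos: "0 < real n"
    by simp
  have "0 \<le> w n \<xi> \<and> w n \<xi> \<le> 4 * exp (- A * real n powr (1 - 2 * \<alpha>))"
    if \<xi>: "real n powr (- \<alpha>) \<le> \<xi>" "\<xi> \<le> \<xi>0" for \<xi>
  proof -
    have \<xi>_in: "\<xi> \<in> {0<..\<xi>0}"
      using \<xi> n_pos by (smt (verit) greaterThanAtMost_iff powr_gt_zero)
    have "w n \<xi> \<le> 4 * exp (- (A * \<xi>\<^sup>2) * real n)"
      using assms(5,7)[OF \<xi>_in] by (intro exp_decay_of_geometric_decay) auto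
    also have "\<dots> \<le> 4 * exp (- A * real n powr (1 - 2 * \<alpha>))"
      using powr_one_minus_twice_le[OF n_pos \<xi>(1)] assms(1) by (simp add: mult.commute)
    finally show ?thesis
      using assms(5)[OF \<xi>_in] by simp
  qed
  then show "\<bar>sup0 (w n) {\<xi>. real n powr - \<alpha> \<le> \<xi> \<and> \<xi> \<le> \<xi>0}\<bar>
      \<le> 4 * exp (- A * real n powr (1 - 2 * \<alpha>))"
    by (intro abs_sup0_le) auto
qed simp

end
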